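(* Let $n\ge1$ and let $A:\mathbb{Z}^n\to\mathbb{C}$ be a function with $T'_{l_i,l_{i+1}}A(l_1,\ldots,l_n)=0$ for all $i$ with $1\le i<n$. Then $$T'_{k_i,k_{i+1}}\left(\sum_{(l_1,\ldots,l_n)}^{(k_1,\ldots,k_{n+1})}A(l_1,\ldots,l_n)\right)(k_1,\ldots,k_{n+1})=0$$ for all $i$ with $1\le i\le n$.
   Context: Extended interval sums: $\sum_{i=a}^b F(i)=F(a)+\cdots+F(b)$ if $a\le b$, $=0$ if $b=a-1$, and $=-F(b+1)-\cdots-F(a-1)$ if $b+1\le a-1$. For functions $A$ on $\mathbb{Z}^{m-1}$ and $(k_1,\ldots,k_m)\in\mathbb{Z}^m$ define recursively $\sum_{(l_1)}^{(k_1,k_2)}A(l_1)=\sum_{l_1=k_1}^{k_2}A(l_1)$ and, for $m>2$, $$\sum_{(l_1,\ldots,l_{m-1})}^{(k_1,\ldots,k_m)}A=\sum_{(l_1,\ldots,l_{m-2})}^{(k_1,\ldots,k_{m-1})}\sum_{l_{m-1}=k_{m-1}+1}^{k_m}A(l_1,\ldots,l_{m-1})+\sum_{(l_1,\ldots,l_{m-2})}^{(k_1,\ldots,k_{m-1}-1)}A(l_1,\ldots,l_{m-2},k_{m-1}).$$ For variables $x,y$: $E_x$ is the shift $E_xF(x)=F(x+1)$ (other variables fixed), $\Delta_x=E_x-\operatorname{id}$, $S_{x,y}$ swaps $x$ and $y$, and $T'_{x,y}=(\operatorname{id}+S_{x,y})(\operatorname{id}+E_y\Delta_x)$; products of operators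 are compositions. *)

theory Defs
  imports Complex_Main
begin

text \<open>Points of Z^n are int lists of length n; position i (0-based) is variable number i+1.\<close>

definition esum :: "(int \<Rightarrow> complex) \<Rightarrow> int \<Rightarrow> int \<Rightarrow> complex" where
  "esum F a b = (if a \<le> b then (\<Sum>i=a..b. F i)
                 else if b = a - 1 then 0
                 else - (\<Sum>i=b+1..a-1. F i))"

text \<open>msum n A k: the extended multiple sum with n summation variables (l_1..l_n)
  and bounds k = (k_1..k_{n+1}); only meaningful for n >= 1 and length k = n+1.\<close>
fun msum :: "nat \<Rightarrow> (int list \<Rightarrow> complex) \<Rightarrow> int list \<Rightarrow> complex" where
  "msum 0 A k = A []"
| "msum (Suc 0) A k = esum (\<lambda>l. A [l]) (k ! 0) (k ! 1)"
| "msum (Suc (Suc n)) A k =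
     msum (Suc n) (\<lambda>ls. esum (\<lambda>l. A (ls @ [l])) (k ! (n+1) + 1) (k ! (n+2))) (take (n+2) k)
   + msum (Suc n) (\<lambda>ls. A (ls @ [k ! (n+1)])) (take (n+1) k @ [k ! (n+1) - 1])"

definition shiftE :: "nat \<Rightarrow> (int list \<Rightarrow> complex) \<Rightarrow> int list \<Rightarrow> complex" where
  "shiftE i F x = F (x[i := x ! i + 1])"

definition diffD :: "nat \<Rightarrow> (int list \<Rightarrow> complex) \<Rightarrow> int list \<Rightarrow> complex" where
  "diffD i F x = shiftE i F x - F x"

definition swapS :: "nat \<Rightarrow> nat \<Rightarrow> (int list \<Rightarrow> complex) \<Rightarrow> int list \<Rightarrow> complex" where
  "swapS i j F x = F (x[i := x ! j, j := x ! i])"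

text \<open>T'_{x,y} = (id + S_{x,y}) (id + E_y Delta_x), x = position i, y = position j.\<close>
definition Tprime :: "nat \<Rightarrow> nat \<Rightarrow> (int list \<Rightarrow> complex) \<Rightarrow> int list \<Rightarrow> complex" where
  "Tprime i j F = (let G = (\<lambda>x. F x + shiftE j (diffD i F) x) in (\<lambda>x. G x + swapS i j G x))"

end

theory Submission
  imports Defs
begin

text \<open>
  The operator T'_{x,y} only involves the two variables x, y, so it suffices to study its
  two-variable version. The basic fact is that a sum of (id + E_y Delta_x) g over a square
  [r, s]^2 vanishes whenever T'_{x,y} g = 0.

  The proof is by induction on n, unfolding the recursion in the last summation variable.
  Pairs of bounds other than the last two are not touched by this recursion and follow by
  linearity. For the pairs (k_{n-1}, k_n) and (k_n, k_{n+1}) the inner sum depends on a bound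
  of the pair itself. Writing the inner sum as its value at bound 0 plus a telescoping sum of
  its differences in that bound, and noting that such a difference is again a multiple sum
  satisfying the hypotheses, reduces these pairs to explicit double and triple sums. For those,
  T' is a signed combination of square sums as above.
\<close>

section \<open>Extended interval sums\<close>

lemma int_shift_invariant_eq:
  fixes f :: "int \<Rightarrow> 'a"
  assumes "\<And>y. f (y + 1) = f y"
  shows "f y = f x"
proof (induction y rule: int_induct[where k = x])
  case (step2 i)
  then show ?case using assms[of "i - 1"] by simp
qed (use assms in simp_all)

lemma esum_same [simp]: "esum F a a = F a"
  by (simp add: esum_def)

lemma esum_empty [simp]: "esum F (b + 1) b = 0"
  by (simp add: esum_def)

lemma esum_empty' [simp]: "esum F a (a - 1) = 0"
  by (simp add: esum_def)

lemma esum_extend_upper: "esum F a (b + 1) = esum F a b + F (b + 1)"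
proof (cases "a \<le> b")
  case True
  then have "{a..b + 1} = insert (b + 1) {a..b}" by auto
  with True show ?thesis by (simp add: esum_def)
next
  case False
  show ?thesis
  proof (cases "b = a - 1")
    case False': False
    with False have "{b + 1..a - 1} = insert (b + 1) {b + 1 + 1..a - 1}" by auto
    with False False' show ?thesis by (auto simp add: esum_def)
  qed (simp add: esum_def)
qed

definition prim :: "(int \<Rightarrow> complex) \<Rightarrow> int \<Rightarrow> complex" where
  "prim F y = esum F 0 y"

lemma esum_eq_prim_diff: "esum F a b = prim F b - prim F (a - 1)"
proof -
  let ?g = "\<lambda>b. esum F a b - prim F b"
  have "?g (b + 1) = ?g b" for b by (simp add: prim_def esum_extend_upper)
  then have "?g b = ?g (a - 1)" by (rule int_shift_invariant_eq)
  then show ?thesis by (simp add: algebra_simps)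
qed

lemma esum_add: "esum (\<lambda>x. f x + g x) a b = esum f a b + esum g a b"
  by (simp add: esum_def sum.distrib)

lemma esum_diff: "esum (\<lambda>x. f x - g x) a b = esum f a b - esum g a b"
  by (simp add: esum_def sum_subtractf)

lemma esum_zero [simp]: "esum (\<lambda>x. 0) a b = 0"
  by (simp add: esum_def)

lemma prim_diff: "prim (\<lambda>x. f x - g x) y = prim f y - prim g y"
  by (simp add: prim_def esum_diff)

lemma esum_split_lower: "esum F a b = F a + esum F (a + 1) b"
  by (simp add: esum_eq_prim_diff[of F a b] esum_eq_prim_diff[of F "a + 1" b]
      esum_eq_prim_diff[of F a a, simplified])

lemma esum_shift: "esum (\<lambda>t. f (t + 1)) a b = esum f (a + 1) (b + 1)"
proof -
  let ?g = "\<lambda>b. esum (\<lambda>t. f (t + 1)) a b - esum f (a + 1) (b + 1)"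
  have "?g (b + 1) = ?g b" for b
    unfolding esum_extend_upper[of "\<lambda>t. f (t + 1)" a b] esum_extend_upper[of f "a + 1" "b + 1"]
    by simp
  then have "?g b = ?g (a - 1)" by (rule int_shift_invariant_eq)
  then show ?thesis by simp
qed

lemma esum_commute:
  "esum (\<lambda>x. esum (\<lambda>y. F x y) c d) a b = esum (\<lambda>y. esum (\<lambda>x. F x y) a b) c d"
proof -
  let ?g = "\<lambda>b. esum (\<lambda>x. esum (\<lambda>y. F x y) c d) a b - esum (\<lambda>y. esum (\<lambda>x. F x y) a b) c d"
  have "?g (b + 1) = ?g b" for b by (simp add: esum_extend_upper esum_add)
  then have "?g b = ?g (a - 1)" by (rule int_shift_invariant_eq)
  then show ?thesis by simp
qed

lemma telescope_from_0: "f x = f 0 + esum (\<lambda>t. f t - f (t - 1)) 1 x"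
proof -
  let ?g = "\<lambda>x. f x - esum (\<lambda>t. f t - f (t - 1)) 1 x"
  have "?g (x + 1) = ?g x" for x by (simp add: esum_extend_upper)
  then have "?g x = ?g 0" by (rule int_shift_invariant_eq)
  then show ?thesis using esum_empty[of _ 0] by (simp add: algebra_simps)
qed

section \<open>The operator T' in two variables\<close>

text \<open>For a function of two variables x, y, \<open>ED2\<close> is id + E_y Delta_x and
  \<open>Tprime2\<close> is T'_{x,y}.\<close>

definition ED2 :: "(int \<Rightarrow> int \<Rightarrow> complex) \<Rightarrow> int \<Rightarrow> int \<Rightarrow> complex" where
  "ED2 f a b = f a b - f a (b + 1) + f (a + 1) (b + 1)"

definition Tprime2 :: "(int \<Rightarrow> int \<Rightarrow> complex) \<Rightarrow> int \<Rightarrow> int \<Rightarrow> complex" where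
  "Tprime2 f a b = ED2 f a b + ED2 f b a"

lemma Tprime_eq_Tprime2:
  "Tprime (length p) (Suc (length p)) F (p @ a # b # r) = Tprime2 (\<lambda>a b. F (p @ a # b # r)) a b"
  by (simp add: Tprime_def shiftE_def diffD_def swapS_def Tprime2_def ED2_def Let_def
      list_update_append nth_append algebra_simps)

lemma Tprime2_add: "Tprime2 (\<lambda>a b. f a b + g a b) x y = Tprime2 f x y + Tprime2 g x y"
  by (simp add: Tprime2_def ED2_def algebra_simps)

lemma Tprime2_diff: "Tprime2 (\<lambda>a b. f a b - g a b) x y = Tprime2 f x y - Tprime2 g x y"
  by (simp add: Tprime2_def ED2_def algebra_simps)

lemma Tprime2_esum:
  "Tprime2 (\<lambda>a b. esum (\<lambda>l. G a b l) c d) x y = esum (\<lambda>l. Tprime2 (\<lambda>a b. G a b l) x y) c d"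
  by (simp add: Tprime2_def ED2_def esum_add esum_diff)

lemma Tprime2_esum_bounds: "Tprime2 (esum F) a b = 0"
  by (simp add: Tprime2_def ED2_def esum_eq_prim_diff)

definition square_sum :: "(int \<Rightarrow> int \<Rightarrow> complex) \<Rightarrow> int \<Rightarrow> int \<Rightarrow> complex" where
  "square_sum g r s = esum (\<lambda>v. esum (\<lambda>u. ED2 g u v) r s) r s"

text \<open>Exchanging the two summations shows that a square sum of \<^const>\<open>ED2\<close> is half the square
  sum of \<^const>\<open>Tprime2\<close>.\<close>
lemma square_sum_eq_0:
  assumes "\<And>u v. Tprime2 g u v = 0"
  shows "square_sum g r s = 0"
proof -
  have "2 * square_sum g r s =
      esum (\<lambda>v. esum (\<lambda>u. ED2 g u v) r s) r s + esum (\<lambda>v. esum (\<lambda>u. ED2 g v u) r s) r s"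
    using esum_commute[of "\<lambda>u v. ED2 g u v" r s r s] by (simp add: square_sum_def)
  also have "\<dots> = esum (\<lambda>v. esum (\<lambda>u. Tprime2 g u v) r s) r s"
    by (simp add: Tprime2_def esum_add)
  finally show ?thesis using assms by simp
qed

section \<open>Double and triple sums\<close>

text \<open>\<open>H a l\<close> stands for an inner sum with upper bound \<open>a\<close>, evaluated at the next
  summation variable \<open>l\<close>; the variable \<open>l = a\<close> forces the inner bound down to \<open>a - 1\<close>.\<close>
definition msum_step :: "(int \<Rightarrow> int \<Rightarrow> complex) \<Rightarrow> int \<Rightarrow> int \<Rightarrow> complex" where
  "msum_step H a b = esum (H a) (a + 1) b + H (a - 1) a"

definition msum_step2 :: "(int \<Rightarrow> int \<Rightarrow> int \<Rightarrow> complex) \<Rightarrow> int \<Rightarrow> int \<Rightarrow> int \<Rightarrow> complex" where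
  "msum_step2 W b x a = msum_step (\<lambda>a v. msum_step (\<lambda>x u. W x u v) x a) a b"

lemma msum_step_diff_upper: "msum_step H a b - msum_step H a (b - 1) = H a b"
  unfolding msum_step_def using esum_extend_upper[of "H a" "a + 1" "b - 1"] by simp

lemma msum_step2_add:
  "msum_step2 (\<lambda>x u v. W1 x u v + W2 x u v) b x a = msum_step2 W1 b x a + msum_step2 W2 b x a"
  by (simp add: msum_step2_def msum_step_def esum_add)

text \<open>The identities below express \<^const>\<open>Tprime2\<close> of a double or triple sum as a signed
  combination of square sums. They are verified by writing every box sum through iterated
  discrete primitives, after which both sides are linear combinations of values of the same
  iterated primitive.\<close>

definition box2 :: "(int \<Rightarrow> int \<Rightarrow> complex) \<Rightarrow> int \<Rightarrow> int \<Rightarrow> int \<Rightarrow> int \<Rightarrow> complex" where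
  "box2 G r1 s1 r2 s2 = esum (\<lambda>v. esum (\<lambda>u. G u v) r1 s1) r2 s2"

definition prim2 :: "(int \<Rightarrow> int \<Rightarrow> complex) \<Rightarrow> int \<Rightarrow> int \<Rightarrow> complex" where
  "prim2 G y1 y2 = prim (\<lambda>v. prim (\<lambda>u. G u v) y1) y2"

lemma box2_eq_prim2:
  "box2 G r1 s1 r2 s2 =
     prim2 G s1 s2 - prim2 G (r1 - 1) s2 - prim2 G s1 (r2 - 1) + prim2 G (r1 - 1) (r2 - 1)"
  unfolding box2_def prim2_def by (simp only: esum_eq_prim_diff prim_diff) simp

lemma box2_ED2:
  "box2 (ED2 G) r1 s1 r2 s2 =
     box2 G r1 s1 r2 s2 - box2 G r1 s1 (r2 + 1) (s2 + 1)
   + box2 G (r1 + 1) (s1 + 1) (r2 + 1) (s2 + 1)"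
proof -
  have "esum (\<lambda>v. esum (\<lambda>u. G u (v + 1)) r1 s1) r2 s2 = box2 G r1 s1 (r2 + 1) (s2 + 1)"
    unfolding box2_def using esum_shift[of "\<lambda>v. esum (\<lambda>u. G u v) r1 s1" r2 s2] by simp
  moreover have "esum (\<lambda>v. esum (\<lambda>u. G (u + 1) (v + 1)) r1 s1) r2 s2 =
      box2 G (r1 + 1) (s1 + 1) (r2 + 1) (s2 + 1)"
    unfolding box2_def using esum_shift[of "\<lambda>v. esum (\<lambda>u. G u v) (r1 + 1) (s1 + 1)" r2 s2]
      esum_shift[of "\<lambda>u. G u _" r1 s1] by simp
  ultimately show ?thesis by (simp add: ED2_def box2_def esum_add esum_diff)
qed

lemma square_sum_eq_box2: "square_sum g r s = box2 (ED2 g) r s r s"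
  by (simp add: square_sum_def box2_def)

lemma msum_step2_const_eq_box2:
  "msum_step2 (\<lambda>_. K) b x a = box2 K x a (a + 1) b + box2 K x (a - 1) a a"
  unfolding msum_step2_def msum_step_def box2_def
  by (simp add: esum_split_lower[of _ x] add.commute)

lemma Tprime2_double_sum_first_pair:
  "Tprime2 (msum_step2 (\<lambda>_. K) b) x a = - square_sum K x (a - 1)"
  unfolding square_sum_eq_box2 box2_ED2
  unfolding Tprime2_def ED2_def msum_step2_const_eq_box2 box2_eq_prim2
  by (simp add: algebra_simps)

lemma Tprime2_double_sum_last_pair:
  "Tprime2 (\<lambda>a b. msum_step2 (\<lambda>_. K) b c a) a b = - square_sum K (a + 1) b"
  unfolding square_sum_eq_box2 box2_ED2
  unfolding Tprime2_def ED2_def msum_step2_const_eq_box2 box2_eq_prim2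
  by (simp add: algebra_simps)

definition box3 ::
    "(int \<Rightarrow> int \<Rightarrow> int \<Rightarrow> complex) \<Rightarrow> int \<Rightarrow> int \<Rightarrow> int \<Rightarrow> int \<Rightarrow> int \<Rightarrow> int \<Rightarrow> complex" where
  "box3 Z r1 s1 r2 s2 r3 s3 = esum (\<lambda>v. esum (\<lambda>u. esum (\<lambda>t. Z t u v) r1 s1) r2 s2) r3 s3"

definition prim3 :: "(int \<Rightarrow> int \<Rightarrow> int \<Rightarrow> complex) \<Rightarrow> int \<Rightarrow> int \<Rightarrow> int \<Rightarrow> complex" where
  "prim3 Z y1 y2 y3 = prim (\<lambda>v. prim (\<lambda>u. prim (\<lambda>t. Z t u v) y1) y2) y3"

lemma box3_eq_prim3:
  "box3 Z r1 s1 r2 s2 r3 s3 =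
     prim3 Z s1 s2 s3 - prim3 Z (r1 - 1) s2 s3 - prim3 Z s1 (r2 - 1) s3
   + prim3 Z (r1 - 1) (r2 - 1) s3 - prim3 Z s1 s2 (r3 - 1) + prim3 Z (r1 - 1) s2 (r3 - 1)
   + prim3 Z s1 (r2 - 1) (r3 - 1) - prim3 Z (r1 - 1) (r2 - 1) (r3 - 1)"
  unfolding box3_def prim3_def by (simp only: esum_eq_prim_diff prim_diff) simp

definition square_sums12 :: "(int \<Rightarrow> int \<Rightarrow> int \<Rightarrow> complex) \<Rightarrow> int \<Rightarrow> int \<Rightarrow> int \<Rightarrow> int \<Rightarrow> complex" where
  "square_sums12 Z r s v1 v2 = esum (\<lambda>v. square_sum (\<lambda>t u. Z t u v) r s) v1 v2"

definition square_sums23 :: "(int \<Rightarrow> int \<Rightarrow> int \<Rightarrow> complex) \<Rightarrow> int \<Rightarrow> int \<Rightarrow> int \<Rightarrow> int \<Rightarrow> complex" where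
  "square_sums23 Z t1 t2 r s = esum (\<lambda>t. square_sum (Z t) r s) t1 t2"

lemma square_sums12_eq_box3:
  "square_sums12 Z r s v1 v2 =
     box3 Z r s r s v1 v2 - box3 Z r s (r + 1) (s + 1) v1 v2
   + box3 Z (r + 1) (s + 1) (r + 1) (s + 1) v1 v2"
  unfolding square_sums12_def square_sum_eq_box2 box2_ED2
  by (simp add: box2_def box3_def esum_add esum_diff)

lemma square_sums23_eq_box3:
  "square_sums23 Z t1 t2 r s =
     box3 Z t1 t2 r s r s - box3 Z t1 t2 r s (r + 1) (s + 1)
   + box3 Z t1 t2 (r + 1) (s + 1) (r + 1) (s + 1)"
proof -
  have "square_sums23 Z t1 t2 r s = square_sum (\<lambda>u v. esum (\<lambda>t. Z t u v) t1 t2) r s"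
    unfolding square_sums23_def square_sum_def ED2_def esum_add esum_diff
    by (simp add: esum_commute[of _ t1 t2])
  then show ?thesis unfolding square_sum_eq_box2 box2_ED2 by (simp add: box2_def box3_def)
qed

lemma msum_step2_esum_eq_box3:
  "msum_step2 (\<lambda>x u v. esum (\<lambda>t. Z t u v) c x) b x a =
     box3 Z c x (x + 1) a (a + 1) b + box3 Z c (x - 1) x x (a + 1) b
   + box3 Z c x (x + 1) (a - 1) a a + box3 Z c (x - 1) x x a a"
  unfolding msum_step2_def msum_step_def box3_def by (simp add: esum_add)

lemma Tprime2_triple_sum_middle_pair:
  "Tprime2 (msum_step2 (\<lambda>x u v. esum (\<lambda>t. Z t u v) c x) b) x a =
   - square_sums23 Z c (x - 1) x (a - 1) - square_sums12 Z (x + 1) a (a + 1) b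
   + square_sums12 Z x x (x + 1) (x + 1) - square_sums12 Z x x (a + 1) (a + 1)
   + square_sums23 Z x x x x - square_sums23 Z a a x x
   - square_sums12 Z x a (x + 1) (x + 1)
   - square_sums12 Z x (a - 1) x x + square_sums12 Z x (a - 1) (x + 1) (x + 1)
   - square_sums12 Z (x + 1) a (x + 2) a
   - square_sums12 Z (x + 1) (a - 1) (x + 1) (x + 1)
   - square_sums23 Z x x x a + square_sums23 Z x x (x + 1) a
   - square_sums23 Z (x + 1) (x + 1) (x + 1) a - square_sums23 Z x x (x + 1) (a - 1)"
  unfolding square_sums12_eq_box3 square_sums23_eq_box3
  unfolding Tprime2_def ED2_def msum_step2_esum_eq_box3 box3_eq_prim3
  by (simp add: algebra_simps)

lemma Tprime2_msum_step:
  assumes "\<And>a l. Tprime2 (\<lambda>a l. H a l - H (a - 1) l) a l = 0"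
  shows "Tprime2 (msum_step H) x y = 0"
proof -
  define K where "K c l = H c l - H (c - 1) l" for c l
  have H: "H a l = H 0 l + esum (\<lambda>c. K c l) 1 a" for a l
    unfolding K_def by (rule telescope_from_0)
  have decomp: "msum_step H = (\<lambda>a b. esum (H 0) a b + msum_step2 (\<lambda>_. K) b 1 a)"
  proof (intro ext)
    fix a b
    have "H a = (\<lambda>l. H 0 l + esum (\<lambda>c. K c l) 1 a)" by (rule ext) (rule H)
    then have "esum (H a) (a + 1) b = esum (H 0) (a + 1) b + box2 K 1 a (a + 1) b"
      by (simp only: box2_def esum_add)
    moreover have "H (a - 1) a = H 0 a + box2 K 1 (a - 1) a a"
      using H[of "a - 1" a] by (simp add: box2_def)
    ultimately show "msum_step H a b = esum (H 0) a b + msum_step2 (\<lambda>_. K) b 1 a"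
      unfolding msum_step_def msum_step2_const_eq_box2 esum_split_lower[of "H 0" a b]
      by (simp add: algebra_simps)
  qed
  have "Tprime2 (msum_step H) x y =
      Tprime2 (esum (H 0)) x y + Tprime2 (\<lambda>a b. msum_step2 (\<lambda>_. K) b 1 a) x y"
    unfolding decomp by (rule Tprime2_add)
  also have "\<dots> = 0"
    unfolding Tprime2_esum_bounds Tprime2_double_sum_last_pair
    using square_sum_eq_0[of K] assms unfolding K_def by simp
  finally show ?thesis .
qed

lemma Tprime2_msum_step2:
  assumes W: "\<And>x u v. Tprime2 (W x) u v = 0"
    and dW: "\<And>x u v. Tprime2 (\<lambda>x u. W x u v - W (x - 1) u v) x u = 0"
  shows "Tprime2 (msum_step2 W b) x a = 0"
proof -
  define Z where "Z t u v = W t u v - W (t - 1) u v" for t u v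
  have "(\<lambda>x u v. W 0 u v + esum (\<lambda>t. Z t u v) 1 x) = W"
    unfolding Z_def by (intro ext) (rule telescope_from_0[symmetric])
  then have "msum_step2 W b =
      (\<lambda>x a. msum_step2 (\<lambda>_. W 0) b x a + msum_step2 (\<lambda>x u v. esum (\<lambda>t. Z t u v) 1 x) b x a)"
    using msum_step2_add[of "\<lambda>_. W 0" "\<lambda>x u v. esum (\<lambda>t. Z t u v) 1 x" b] by auto
  then have "Tprime2 (msum_step2 W b) x a =
      Tprime2 (msum_step2 (\<lambda>_. W 0) b) x a
    + Tprime2 (msum_step2 (\<lambda>x u v. esum (\<lambda>t. Z t u v) 1 x) b) x a"
    by (simp add: Tprime2_add)
  moreover have "Tprime2 (msum_step2 (\<lambda>_. W 0) b) x a = 0"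
    unfolding Tprime2_double_sum_first_pair using square_sum_eq_0[OF W] by simp
  moreover have "square_sums12 Z r s v1 v2 = 0" for r s v1 v2
    unfolding square_sums12_def Z_def using square_sum_eq_0[OF dW] by simp
  moreover have "square_sums23 Z t1 t2 r s = 0" for t1 t2 r s
    unfolding square_sums23_def Z_def using square_sum_eq_0 Tprime2_diff W by simp
  ultimately show ?thesis
    unfolding Tprime2_triple_sum_middle_pair by simp
qed

section \<open>The multiple sum\<close>

lemma msum_add: "msum n (\<lambda>ls. f ls + g ls) k = msum n f k + msum n g k"
  by (induction n f k arbitrary: g rule: msum.induct) (simp_all add: esum_add)

lemma msum_diff: "msum n (\<lambda>ls. f ls - g ls) k = msum n f k - msum n g k"
  by (induction n f k arbitrary: g rule: msum.induct) (simp_all add: esum_diff)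

lemma msum_zero: "msum n (\<lambda>ls. 0) k = 0"
  by (induction n "\<lambda>ls::int list. 0::complex" k rule: msum.induct) simp_all

lemma msum_cong: "(\<And>ls. length ls = n \<Longrightarrow> f ls = g ls) \<Longrightarrow> msum n f k = msum n g k"
proof (induction n f k arbitrary: g rule: msum.induct)
  case (3 n A k)
  show ?case
    by (simp only: msum.simps, (rule arg_cong2[where f = "(+)"]; rule "3.IH"))
      (simp_all add: "3.prems")
qed simp_all

lemma msum_esum:
  "msum m (\<lambda>ls. esum (\<lambda>l. G ls l) c d) k = esum (\<lambda>l. msum m (\<lambda>ls. G ls l) k) c d"
proof -
  let ?g = "\<lambda>d. msum m (\<lambda>ls. esum (\<lambda>l. G ls l) c d) k - esum (\<lambda>l. msum m (\<lambda>ls. G ls l) k) c d"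
  have "?g (d + 1) = ?g d" for d by (simp add: esum_extend_upper msum_add)
  then have "?g d = ?g (c - 1)" by (rule int_shift_invariant_eq)
  then show ?thesis by (simp add: msum_zero)
qed

lemma Tprime2_msum_eq_0:
  assumes "\<And>ls. length ls = m \<Longrightarrow> Tprime2 (\<lambda>a b. G a b ls) x y = 0"
  shows "Tprime2 (\<lambda>a b. msum m (G a b) k) x y = 0"
proof -
  have "Tprime2 (\<lambda>a b. msum m (G a b) k) x y = msum m (\<lambda>ls. Tprime2 (\<lambda>a b. G a b ls) x y) k"
    by (simp add: Tprime2_def ED2_def msum_add msum_diff)
  also have "\<dots> = 0"
    using msum_cong[of m "\<lambda>ls. Tprime2 (\<lambda>a b. G a b ls) x y" "\<lambda>ls. 0"] assms
    by (simp add: msum_zero)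
  finally show ?thesis .
qed

lemma msum_Suc_append:
  assumes "length p = m"
  shows "msum (Suc m) A (p @ [c, d]) = msum_step (\<lambda>c l. msum m (\<lambda>ls. A (ls @ [l])) (p @ [c])) c d"
proof (cases m)
  case 0
  with assms show ?thesis by (simp add: msum_step_def esum_split_lower[of _ c d])
next
  case (Suc m')
  with assms have "(p @ [c, d]) ! (m' + 1) = c" "(p @ [c, d]) ! (m' + 2) = d"
      "take (m' + 2) (p @ [c, d]) = p @ [c]" "take (m' + 1) (p @ [c, d]) = p"
    by (simp_all add: nth_append)
  then show ?thesis unfolding Suc msum.simps msum_esum by (simp add: msum_step_def)
qed

lemma msum_Suc_diff_upper:
  assumes "length p = m"
  shows "msum (Suc m) A (p @ [c, d]) - msum (Suc m) A (p @ [c, d - 1]) =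
    msum m (\<lambda>ls. A (ls @ [d])) (p @ [c])"
  unfolding msum_Suc_append[OF assms] by (rule msum_step_diff_upper)

definition Tprime_adjacent_vanishes :: "nat \<Rightarrow> (int list \<Rightarrow> complex) \<Rightarrow> bool" where
  "Tprime_adjacent_vanishes n A \<longleftrightarrow>
     (\<forall>p r x y. length p + length r + 2 = n \<longrightarrow> Tprime2 (\<lambda>a b. A (p @ a # b # r)) x y = 0)"

lemma Tprime_adjacent_vanishesD:
  "Tprime_adjacent_vanishes n A \<Longrightarrow> length p + length r + 2 = n \<Longrightarrow>
     Tprime2 (\<lambda>a b. A (p @ a # b # r)) x y = 0"
  unfolding Tprime_adjacent_vanishes_def by blast

lemma Tprime_adjacent_vanishes_append:
  "Tprime_adjacent_vanishes (Suc m) A \<Longrightarrow> Tprime_adjacent_vanishes m (\<lambda>ls. A (ls @ [l]))"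
  unfolding Tprime_adjacent_vanishes_def
proof (intro allI impI)
  fix p r :: "int list" and x y :: int
  assume "\<forall>p r x y. length p + length r + 2 = Suc m \<longrightarrow> Tprime2 (\<lambda>a b. A (p @ a # b # r)) x y = 0"
    and "length p + length r + 2 = m"
  then show "Tprime2 (\<lambda>a b. A ((p @ a # b # r) @ [l])) x y = 0"
    by (auto dest: spec[of _ p] spec[of _ "r @ [l]"])
qed

lemma Tprime2_msum_last_pair:
  assumes A: "Tprime_adjacent_vanishes (Suc m) A" and p: "length p = m"
  shows "Tprime2 (\<lambda>a b. msum (Suc m) A (p @ [a, b])) x y = 0"
proof -
  define H where "H a l = msum m (\<lambda>ls. A (ls @ [l])) (p @ [a])" for a l
  have "Tprime2 (\<lambda>a l. H a l - H (a - 1) l) a l = 0" for a l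
  proof (cases m)
    case 0
    with p show ?thesis by (simp add: H_def Tprime2_def ED2_def)
  next
    case (Suc m')
    with p obtain p' e where p': "p = p' @ [e]" "length p' = m'"
      by (cases p rule: rev_cases) auto
    have "H a l - H (a - 1) l = msum m' (\<lambda>ls. A (ls @ [a, l])) (p' @ [e])" for a l
      unfolding H_def p' Suc using msum_Suc_diff_upper[OF p'(2)] by simp
    moreover have "Tprime2 (\<lambda>a l. msum m' (\<lambda>ls. A (ls @ [a, l])) (p' @ [e])) a l = 0"
      by (rule Tprime2_msum_eq_0) (use Tprime_adjacent_vanishesD[OF A, of _ "[]"] Suc in simp)
    ultimately show ?thesis by simp
  qed
  then show ?thesis
    unfolding msum_Suc_append[OF p] H_def[symmetric] by (rule Tprime2_msum_step)
qed

lemma Tprime2_msum_penultimate_pair: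
  assumes A: "Tprime_adjacent_vanishes (Suc (Suc m)) A" and p: "length p = m"
  shows "Tprime2 (\<lambda>x a. msum (Suc (Suc m)) A (p @ [x, a, b])) x a = 0"
proof -
  define W where "W x u v = msum m (\<lambda>ls. A (ls @ [u, v])) (p @ [x])" for x u v
  have "msum (Suc (Suc m)) A (p @ [x, a, b]) = msum_step2 W b x a" for x a
    using msum_Suc_append[of "p @ [x]" "Suc m"] msum_Suc_append[OF p] p
    by (simp add: msum_step2_def W_def)
  moreover have "Tprime2 (W x) u v = 0" for x u v
    unfolding W_def
    by (rule Tprime2_msum_eq_0) (use Tprime_adjacent_vanishesD[OF A, of _ "[]"] in simp)
  moreover have "Tprime2 (\<lambda>x u. W x u v - W (x - 1) u v) x u = 0" for x u v
  proof (cases m)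
    case 0
    with p show ?thesis by (simp add: W_def Tprime2_def ED2_def)
  next
    case (Suc m')
    with p obtain p' e where p': "p = p' @ [e]" "length p' = m'"
      by (cases p rule: rev_cases) auto
    have "W x u v - W (x - 1) u v = msum m' (\<lambda>ls. A (ls @ [x, u, v])) (p' @ [e])" for x u
      unfolding W_def p' Suc using msum_Suc_diff_upper[OF p'(2)] by simp
    moreover have "Tprime2 (\<lambda>x u. msum m' (\<lambda>ls. A (ls @ [x, u, v])) (p' @ [e])) x u = 0"
      by (rule Tprime2_msum_eq_0) (use Tprime_adjacent_vanishesD[OF A, of _ "[v]"] Suc in simp)
    ultimately show ?thesis by simp
  qed
  ultimately show ?thesis using Tprime2_msum_step2 by simp
qed

lemma Tprime2_msum:
  "Tprime_adjacent_vanishes n A \<Longrightarrow> length p + length r + 2 = n + 1 \<Longrightarrow>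
     Tprime2 (\<lambda>a b. msum n A (p @ a # b # r)) x y = 0"
proof (induction n arbitrary: A p r x y)
  case (Suc m)
  consider "r = []" | c where "r = [c]" | r' c d where "r = r' @ [c, d]"
  proof (cases r rule: rev_cases)
    case (snoc r1 d)
    then show ?thesis using that by (cases r1 rule: rev_cases) auto
  qed (use that in simp)
  then show ?case
  proof cases
    case 1
    with Suc.prems show ?thesis using Tprime2_msum_last_pair by simp
  next
    case (2 c)
    with Suc.prems obtain m' where "m = Suc m'" "length p = m'"
      by (cases m) auto
    with Suc.prems 2 show ?thesis using Tprime2_msum_penultimate_pair by simp
  next
    case (3 r' c d)
    have "length (p @ a # b # r') = m" for a b using Suc.prems(2) 3 by simp
    then have recursion: "msum (Suc m) A (p @ a # b # r) =
        esum (\<lambda>l. msum m (\<lambda>ls. A (ls @ [l])) (p @ a # b # r' @ [c])) (c + 1) d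
      + msum m (\<lambda>ls. A (ls @ [c])) (p @ a # b # r' @ [c - 1])" for a b
      using msum_Suc_append[of "p @ a # b # r'" m A c d] 3 by (simp add: msum_step_def)
    have "length p + length (r' @ [e]) + 2 = m + 1" for e using Suc.prems(2) 3 by simp
    then have "Tprime2 (\<lambda>a b. msum m (\<lambda>ls. A (ls @ [l])) (p @ a # b # r' @ [e])) x y = 0" for l e
      using Suc.IH[OF Tprime_adjacent_vanishes_append[OF Suc.prems(1)]] by simp
    then show ?thesis unfolding recursion Tprime2_add Tprime2_esum by simp
  qed
qed simp

theorem corollary1:
  fixes n :: nat and A :: "int list \<Rightarrow> complex"
  assumes "n \<ge> 1"
    and "\<And>i l. Suc i < n \<Longrightarrow> length l = n \<Longrightarrow> Tprime i (Suc i) A l = 0"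
  shows "\<And>i k. i < n \<Longrightarrow> length k = n + 1 \<Longrightarrow> Tprime i (Suc i) (msum n A) k = 0"
proof -
  fix i :: nat and k :: "int list" assume i: "i < n" and k: "length k = n + 1"
  have A: "Tprime_adjacent_vanishes n A"
    unfolding Tprime_adjacent_vanishes_def
  proof (intro allI impI)
    fix p r :: "int list" and x y :: int assume "length p + length r + 2 = n"
    then show "Tprime2 (\<lambda>a b. A (p @ a # b # r)) x y = 0"
      using assms(2)[of "length p" "p @ x # y # r"] by (simp add: Tprime_eq_Tprime2)
  qed
  define p r where "p = take i k" and "r = drop (Suc (Suc i)) k"
  have "k = p @ k ! i # k ! Suc i # r" and p: "length p = i"
    using i k by (simp_all add: p_def r_def Cons_nth_drop_Suc)
  then obtain a b where k_eq: "k = p @ a # b # r" by blast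
  have "Tprime i (Suc i) (msum n A) k = Tprime2 (\<lambda>a b. msum n A (p @ a # b # r)) a b"
    unfolding k_eq p[symmetric] by (rule Tprime_eq_Tprime2)
  also have "\<dots> = 0"
    by (rule Tprime2_msum[OF A]) (use i k k_eq p in simp)
  finally show "Tprime i (Suc i) (msum n A) k = 0" .
qed

end
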